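(* Let $p=p(n)$ satisfy $\frac{\log n+\omega(1)}{n}\le p\le \frac{1.1\log n}{n}$ (i.e. $np-\log n\to\infty$ and $p\le 1.1\log n/n$), and let $G\sim G(n,p)$. Then with probability tending to $1$ as $n\to\infty$, every vertex set $S\subseteq V(G)$ with $1\le |S|\le n/(\log n)^3$ satisfies $|E(S,\bar S)|\ge \delta(G)\,|S|$.
   Context: $G(n,p)$ is the Erdős–Rényi random graph on $n$ vertices in which each possible edge is present independently with probability $p$. $\delta(G)$ is the minimum degree of $G$. For $S\subseteq V(G)$, $\bar S=V(G)\setminus S$, and $E(S,\bar S)$ is the set of edges of $G$ with one endpoint in $S$ and the other in $\bar S$. $\log$ is the natural logarithm. *)

theory Defs
  imports Complex_Main
begin

text \<open>Graphs on vertex set {0..<n}: an edge set is a set of 2-element subsets of {0..<n}.\<close>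

definition all_edges :: "nat \<Rightarrow> nat set set" where
  "all_edges n = {e. \<exists>u v. u < n \<and> v < n \<and> u \<noteq> v \<and> e = {u, v}}"

definition gnp_prob :: "nat \<Rightarrow> real \<Rightarrow> (nat set set \<Rightarrow> bool) \<Rightarrow> real" where
  "gnp_prob n p P =
     (\<Sum>E\<in>{E. E \<subseteq> all_edges n \<and> P E}.
        p ^ card E * (1 - p) ^ (card (all_edges n) - card E))"

definition degree :: "nat set set \<Rightarrow> nat \<Rightarrow> nat" where
  "degree E v = card {e \<in> E. v \<in> e}"

definition min_degree :: "nat \<Rightarrow> nat set set \<Rightarrow> nat" where
  "min_degree n E = Min (degree E ` {0..<n})"

definition cut_edges :: "nat \<Rightarrow> nat set set \<Rightarrow> nat set \<Rightarrow> nat set set" where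
  "cut_edges n E S = {e \<in> E. \<exists>u w. u \<in> S \<and> w \<in> {0..<n} - S \<and> e = {u, w}}"

end

theory Submission
  imports Defs "HOL-Real_Asymp.Real_Asymp"
begin

(* Let j = floor (n p / 10) and call a vertex low if its degree is at most T = j + 24.
   With high probability
   (i) every set H of at most n / (log n)^3 vertices spans at most 2 |H| edges (first moment),
   (ii) no two low vertices are adjacent or have a common neighbour (a Chernoff bound for the
       lower tail of a degree, squared, beats the n^3 choices of the configuration), and
   (iii) min degree <= j + 19: among the first n^(19/20) vertices, each has at most j edges to
       the others with probability about exp (-0.8 n p), independently, so one of them does; and
       none of them has 20 neighbours among these first vertices.
   On this event let H be the set of vertices of S of degree above T.  By (ii) low vertices have
   no low neighbours and every vertex has at most one low neighbour, so with (i) the edges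
   inside S contribute at most 6 |H| to the degree sum of S, while by (iii) this degree sum is at
   least delta |S| + 6 |H|.  Hence |E(S, S-bar)| >= delta |S|. *)

section \<open>Random subsets of a finite set\<close>

definition subset_weight :: "real \<Rightarrow> 'a set \<Rightarrow> 'a set \<Rightarrow> real" where
  "subset_weight p A E = p ^ card E * (1 - p) ^ (card A - card E)"

definition subset_prob :: "real \<Rightarrow> 'a set \<Rightarrow> ('a set \<Rightarrow> bool) \<Rightarrow> real" where
  "subset_prob p A P = (\<Sum>E\<in>Pow A. if P E then subset_weight p A E else 0)"

lemma finite_all_edges: "finite (all_edges n)"
proof -
  have "all_edges n \<subseteq> Pow {0..<n}" unfolding all_edges_def by auto
  then show ?thesis by (rule finite_subset) auto
qed

lemma gnp_prob_eq_subset_prob: "gnp_prob n p P = subset_prob p (all_edges n) P"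
proof -
  have "{E. E \<subseteq> all_edges n \<and> P E} = {E \<in> Pow (all_edges n). P E}" by auto
  then show ?thesis
    unfolding gnp_prob_def subset_prob_def subset_weight_def
    using sum.inter_filter[of "Pow (all_edges n)" _ P] by (simp add: finite_all_edges)
qed

lemma subset_weight_nonneg: "0 \<le> p \<Longrightarrow> p \<le> 1 \<Longrightarrow> 0 \<le> subset_weight p A E"
  unfolding subset_weight_def by simp

lemma subset_prob_cong:
  "(\<And>E. E \<subseteq> A \<Longrightarrow> P E = Q E) \<Longrightarrow> subset_prob p A P = subset_prob p A Q"
  unfolding subset_prob_def by (intro sum.cong) auto

lemma subset_prob_mono:
  assumes "0 \<le> p" "p \<le> 1" "\<And>E. E \<subseteq> A \<Longrightarrow> P E \<Longrightarrow> Q E"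
  shows "subset_prob p A P \<le> subset_prob p A Q"
  unfolding subset_prob_def using assms by (intro sum_mono) (auto simp: subset_weight_nonneg)

lemma subset_prob_True:
  assumes "finite A"
  shows "subset_prob p A (\<lambda>_. True) = 1"
proof -
  have "1 = (\<Prod>x\<in>A. p + (1 - p))" by simp
  also have "\<dots> = (\<Sum>X\<in>Pow A. (\<Prod>x\<in>X. p) * (\<Prod>x\<in>A - X. 1 - p))"
    by (rule prod_add[OF assms])
  also have "\<dots> = (\<Sum>X\<in>Pow A. subset_weight p A X)"
  proof (rule sum.cong)
    fix X assume "X \<in> Pow A"
    then have "card (A - X) = card A - card X"
      using assms by (auto intro: card_Diff_subset finite_subset)
    then show "(\<Prod>x\<in>X. p) * (\<Prod>x\<in>A - X. 1 - p) = subset_weight p A X"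
      by (simp add: subset_weight_def)
  qed simp
  finally show ?thesis unfolding subset_prob_def by simp
qed

lemma subset_prob_le_1:
  assumes "finite A" "0 \<le> p" "p \<le> 1"
  shows "subset_prob p A P \<le> 1"
  using subset_prob_mono[OF assms(2,3), of A P "\<lambda>_. True"] subset_prob_True[OF assms(1)] by simp

lemma subset_prob_not:
  assumes "finite A"
  shows "subset_prob p A (\<lambda>E. \<not> P E) = 1 - subset_prob p A P"
proof -
  have "subset_prob p A P + subset_prob p A (\<lambda>E. \<not> P E) = subset_prob p A (\<lambda>_. True)"
    unfolding subset_prob_def sum.distrib[symmetric] by (intro sum.cong) auto
  then show ?thesis using subset_prob_True[OF assms] by simp
qed

lemma subset_prob_disj_le:
  assumes "0 \<le> p" "p \<le> 1"
  shows "subset_prob p A (\<lambda>E. P E \<or> Q E) \<le> subset_prob p A P + subset_prob p A Q"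
  unfolding subset_prob_def sum.distrib[symmetric] using assms
  by (intro sum_mono) (auto simp: subset_weight_nonneg)

lemma subset_prob_Bex_le:
  assumes "0 \<le> p" "p \<le> 1" "finite I"
  shows "subset_prob p A (\<lambda>E. \<exists>i\<in>I. P i E) \<le> (\<Sum>i\<in>I. subset_prob p A (P i))"
proof -
  have "subset_prob p A (\<lambda>E. \<exists>i\<in>I. P i E)
      \<le> (\<Sum>E\<in>Pow A. \<Sum>i\<in>I. if P i E then subset_weight p A E else 0)"
    unfolding subset_prob_def
  proof (intro sum_mono)
    fix E
    have "subset_weight p A E \<le> (\<Sum>i\<in>I. if P i E then subset_weight p A E else 0)"
      if "i \<in> I" "P i E" for i
      using that assms member_le_sum[of i I "\<lambda>i. if P i E then subset_weight p A E else 0"]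
      by (simp add: subset_weight_nonneg)
    then show "(if \<exists>i\<in>I. P i E then subset_weight p A E else 0)
        \<le> (\<Sum>i\<in>I. if P i E then subset_weight p A E else 0)"
      using assms by (auto intro!: sum_nonneg simp: subset_weight_nonneg)
  qed
  also have "\<dots> = (\<Sum>i\<in>I. subset_prob p A (P i))"
    unfolding subset_prob_def by (rule sum.swap)
  finally show ?thesis .
qed

lemma sum_Pow_split:
  assumes "finite A" "F \<subseteq> A"
  shows "(\<Sum>E\<in>Pow A. f E) = (\<Sum>X\<in>Pow F. \<Sum>Y\<in>Pow (A - F). f (X \<union> Y))"
proof -
  have "bij_betw (\<lambda>(X, Y). X \<union> Y) (Pow F \<times> Pow (A - F)) (Pow A)"
    by (rule bij_betw_byWitness[where f' = "\<lambda>E. (E \<inter> F, E - F)"]) (use assms in auto)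
  then have "(\<Sum>E\<in>Pow A. f E) = (\<Sum>(X, Y)\<in>Pow F \<times> Pow (A - F). f (X \<union> Y))"
    by (simp add: sum.reindex_bij_betw[symmetric] case_prod_unfold)
  also have "\<dots> = (\<Sum>X\<in>Pow F. \<Sum>Y\<in>Pow (A - F). f (X \<union> Y))"
    by (subst sum.cartesian_product) simp
  finally show ?thesis .
qed

lemma subset_weight_Un:
  assumes "finite A" "F \<subseteq> A" "X \<subseteq> F" "Y \<subseteq> A - F"
  shows "subset_weight p A (X \<union> Y) = subset_weight p F X * subset_weight p (A - F) Y"
proof -
  have fin: "finite F" "finite X" "finite Y"
    using assms by (auto intro: finite_subset)
  have cXY: "card (X \<union> Y) = card X + card Y"
    using assms fin by (intro card_Un_disjoint) auto
  have cA: "card A = card F + card (A - F)"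
    using assms fin card_Diff_subset[of F A] card_mono[OF assms(1,2)] by simp
  have "card X \<le> card F" "card Y \<le> card (A - F)"
    using assms fin by (auto intro: card_mono)
  then have "card A - card (X \<union> Y) = (card F - card X) + (card (A - F) - card Y)"
    using cXY cA by simp
  then show ?thesis unfolding subset_weight_def using cXY by (simp add: power_add)
qed

lemma subset_prob_indep:
  assumes "finite A" "F \<subseteq> A"
  shows "subset_prob p A (\<lambda>E. P (E \<inter> F) \<and> Q (E - F)) = subset_prob p F P * subset_prob p (A - F) Q"
proof -
  have "subset_prob p A (\<lambda>E. P (E \<inter> F) \<and> Q (E - F)) =
     (\<Sum>X\<in>Pow F. \<Sum>Y\<in>Pow (A - F).
        (if P X then subset_weight p F X else 0) * (if Q Y then subset_weight p (A - F) Y else 0))"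
    unfolding subset_prob_def
  proof (subst sum_Pow_split[OF assms], intro sum.cong refl)
    fix X Y assume XY: "X \<in> Pow F" "Y \<in> Pow (A - F)"
    then have "(X \<union> Y) \<inter> F = X" "(X \<union> Y) - F = Y" by auto
    then show "(if P ((X \<union> Y) \<inter> F) \<and> Q (X \<union> Y - F) then subset_weight p A (X \<union> Y) else 0) =
        (if P X then subset_weight p F X else 0) * (if Q Y then subset_weight p (A - F) Y else 0)"
      using subset_weight_Un[OF assms, of X Y p] XY by auto
  qed
  also have "\<dots> = subset_prob p F P * subset_prob p (A - F) Q"
    unfolding subset_prob_def by (simp add: sum_product)
  finally show ?thesis .
qed

lemma subset_prob_indep_family:
  assumes "finite I" "finite A" "\<And>i. i \<in> I \<Longrightarrow> F i \<subseteq> A"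
    and "\<And>i j. i \<in> I \<Longrightarrow> j \<in> I \<Longrightarrow> i \<noteq> j \<Longrightarrow> F i \<inter> F j = {}"
  shows "subset_prob p A (\<lambda>E. \<forall>i\<in>I. Q i (E \<inter> F i)) = (\<Prod>i\<in>I. subset_prob p (F i) (Q i))"
  using assms
proof (induction I arbitrary: A rule: finite_induct)
  case empty
  then show ?case using subset_prob_True by simp
next
  case (insert i0 I)
  have sub: "F i0 \<subseteq> A" using insert.prems by auto
  have disj: "F i \<inter> F i0 = {}" if "i \<in> I" for i
    using that insert.hyps(2) insert.prems(3) by (metis insertCI)
  then have "(E - F i0) \<inter> F i = E \<inter> F i" if "i \<in> I" for E i
    using that by blast
  then have "subset_prob p A (\<lambda>E. \<forall>i\<in>insert i0 I. Q i (E \<inter> F i)) =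
      subset_prob p A (\<lambda>E. Q i0 (E \<inter> F i0) \<and> (\<lambda>Y. \<forall>i\<in>I. Q i (Y \<inter> F i)) (E - F i0))"
    by (intro subset_prob_cong) auto
  also have "\<dots> = subset_prob p (F i0) (Q i0) * subset_prob p (A - F i0) (\<lambda>Y. \<forall>i\<in>I. Q i (Y \<inter> F i))"
    by (rule subset_prob_indep[OF insert.prems(1) sub])
  also have "subset_prob p (A - F i0) (\<lambda>Y. \<forall>i\<in>I. Q i (Y \<inter> F i)) = (\<Prod>i\<in>I. subset_prob p (F i) (Q i))"
    using insert.prems disj by (intro insert.IH) blast+
  finally show ?case using insert.hyps by simp
qed

lemma subset_prob_superset:
  assumes "finite A" "F \<subseteq> A"
  shows "subset_prob p A (\<lambda>E. F \<subseteq> E) = p ^ card F"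
proof -
  have "subset_prob p A (\<lambda>E. F \<subseteq> E) = subset_prob p A (\<lambda>E. E \<inter> F = F \<and> True)"
    by (intro subset_prob_cong) auto
  also have "\<dots> = subset_prob p F (\<lambda>X. X = F) * subset_prob p (A - F) (\<lambda>_. True)"
    by (rule subset_prob_indep[OF assms])
  also have "subset_prob p (A - F) (\<lambda>_. True) = 1"
    using assms by (intro subset_prob_True) simp
  also have "subset_prob p F (\<lambda>X. X = F) = subset_weight p F F"
    using finite_subset[OF assms(2,1)] by (simp add: subset_prob_def)
  finally show ?thesis by (simp add: subset_weight_def)
qed

definition binom_cdf :: "nat \<Rightarrow> real \<Rightarrow> nat \<Rightarrow> real" where
  "binom_cdf N p T = (\<Sum>i\<le>T. real (N choose i) * p ^ i * (1 - p) ^ (N - i))"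

lemma subset_prob_card_le:
  assumes "finite F"
  shows "subset_prob p F (\<lambda>X. card X \<le> T) = binom_cdf (card F) p T"
proof -
  have "subset_prob p F (\<lambda>X. card X \<le> T) = (\<Sum>X\<in>{X\<in>Pow F. card X \<le> T}. subset_weight p F X)"
    unfolding subset_prob_def by (rule sum.inter_filter[symmetric]) (simp add: assms)
  also have "{X\<in>Pow F. card X \<le> T} = (\<Union>i\<le>T. {X. X \<subseteq> F \<and> card X = i})" by auto
  also have "(\<Sum>X\<in>(\<Union>i\<le>T. {X. X \<subseteq> F \<and> card X = i}). subset_weight p F X) =
      (\<Sum>i\<le>T. \<Sum>X\<in>{X. X \<subseteq> F \<and> card X = i}. subset_weight p F X)"
    by (rule sum.UNION_disjoint) (auto simp: assms)
  also have "\<dots> = (\<Sum>i\<le>T. real (card F choose i) * p ^ i * (1 - p) ^ (card F - i))"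
  proof (rule sum.cong[OF refl])
    fix i
    have "(\<Sum>X\<in>{X. X \<subseteq> F \<and> card X = i}. subset_weight p F X)
        = (\<Sum>X\<in>{X. X \<subseteq> F \<and> card X = i}. p ^ i * (1 - p) ^ (card F - i))"
      by (rule sum.cong) (auto simp: subset_weight_def)
    then show "(\<Sum>X\<in>{X. X \<subseteq> F \<and> card X = i}. subset_weight p F X)
        = real (card F choose i) * p ^ i * (1 - p) ^ (card F - i)"
      using n_subsets[OF assms, of i] by simp
  qed
  finally show ?thesis unfolding binom_cdf_def .
qed

lemma binom_cdf_nonneg: "0 \<le> p \<Longrightarrow> p \<le> 1 \<Longrightarrow> 0 \<le> binom_cdf N p T"
  unfolding binom_cdf_def by (intro sum_nonneg) auto

lemma binom_cdf_le_1:
  assumes "0 \<le> p" "p \<le> 1"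
  shows "binom_cdf N p T \<le> 1"
proof -
  have "binom_cdf N p T = subset_prob p {0..<N} (\<lambda>X. card X \<le> T)"
    using subset_prob_card_le[of "{0..<N}" p T] by simp
  also have "\<dots> \<le> 1" using assms by (intro subset_prob_le_1) auto
  finally show ?thesis .
qed

section \<open>Elementary estimates for binomial tails\<close>

lemma sum_power_div_fact_le_exp:
  fixes x :: real
  assumes "0 \<le> x"
  shows "(\<Sum>i\<le>T. x ^ i / fact i) \<le> exp x"
proof -
  have s: "(\<lambda>n. x ^ n / fact n) sums exp x"
    using exp_converges[of x] by (simp add: divide_inverse mult.commute)
  show ?thesis
    using sum_le_suminf[OF sums_summable[OF s], of "{..T}"] sums_unique[OF s] assms by simp
qed

lemma power_div_fact_le_exp:
  fixes x :: real
  assumes "0 \<le> x"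
  shows "x ^ m / fact m \<le> exp x"
proof -
  have "x ^ m / fact m \<le> (\<Sum>i\<le>m. x ^ i / fact i)"
    using assms by (intro member_le_sum) auto
  then show ?thesis using sum_power_div_fact_le_exp[OF assms, of m] by linarith
qed

lemma binomial_le_power_div_fact: "real (N choose i) \<le> real N ^ i / fact i"
proof -
  have "real (N choose i) * fact i \<le> real N ^ i"
    by (metis binomial_fact_pow of_nat_fact of_nat_le_iff of_nat_mult of_nat_power)
  then show ?thesis by (simp add: field_simps)
qed

lemma power_div_exp_le_fact: "real m ^ m / exp (real m) \<le> fact m"
  using power_div_fact_le_exp[of "real m" m] by (simp add: field_simps)

lemma exp_minus_2_le: "exp (-2::real) \<le> 1/7"
proof -
  have "(7::real) = (\<Sum>i\<le>4. 2 ^ i / fact i)"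
    by (simp add: numeral_eq_Suc fact_Suc)
  also have "\<dots> \<le> exp 2" by (rule sum_power_div_fact_le_exp) simp
  finally show ?thesis by (simp add: exp_minus field_simps)
qed

lemma exp_3_le: "exp (3::real) \<le> 27"
proof -
  have "exp (3::real) = exp 1 ^ 3" by (simp add: exp_of_nat_mult[symmetric])
  also have "\<dots> \<le> 3 ^ 3" using exp_le by (intro power_mono) auto
  finally show ?thesis by simp
qed

text \<open>A Chernoff-type upper bound for the lower tail; the factor \<open>exp (2 T)\<close> trades
  \<open>(N p)\<^sup>i\<close> for \<open>(exp (-2) N p)\<^sup>i\<close>, so that the sum is at most \<open>exp (exp (-2) N p)\<close>.\<close>

lemma binom_cdf_upper:
  assumes p: "0 \<le> p" "p \<le> 1" and T: "T \<le> N"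
  shows "binom_cdf N p T \<le> exp (2 * real T) * exp (p * T - (1 - exp (-2)) * N * p)"
proof -
  define \<theta> where "\<theta> = exp (-2::real)"
  have th: "0 < \<theta>" unfolding \<theta>_def by auto
  have q: "(1 - p) ^ (N - T) \<le> exp (- p * (real N - real T))"
  proof -
    have "(1 - p) ^ (N - T) \<le> exp (- p) ^ (N - T)"
      using p by (intro power_mono) (auto simp: exp_ge_add_one_self[of "-p", simplified])
    also have "\<dots> = exp (- p * (real N - real T))"
      using T by (simp add: exp_of_nat_mult[symmetric] mult.commute)
    finally show ?thesis .
  qed
  have "binom_cdf N p T \<le> (\<Sum>i\<le>T. exp (2 * real T) * ((\<theta> * N * p) ^ i / fact i) * (1 - p) ^ (N - T))"
    unfolding binom_cdf_def
  proof (intro sum_mono)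
    fix i assume i: "i \<in> {..T}"
    have "real (N choose i) * p ^ i \<le> (real N ^ i / fact i) * p ^ i"
      using p by (intro mult_right_mono binomial_le_power_div_fact) simp
    also have "\<dots> = exp (2 * real i) * ((\<theta> * N * p) ^ i / fact i)"
      unfolding \<theta>_def
      by (simp add: power_mult_distrib exp_of_nat_mult[symmetric] exp_add[symmetric])
    also have "\<dots> \<le> exp (2 * real T) * ((\<theta> * N * p) ^ i / fact i)"
      using i p th by (intro mult_right_mono) auto
    finally have a: "real (N choose i) * p ^ i \<le> exp (2 * real T) * ((\<theta> * N * p) ^ i / fact i)" .
    have b: "(1 - p) ^ (N - i) \<le> (1 - p) ^ (N - T)"
      using i p by (intro power_decreasing) auto
    show "real (N choose i) * p ^ i * (1 - p) ^ (N - i)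
        \<le> exp (2 * real T) * ((\<theta> * N * p) ^ i / fact i) * (1 - p) ^ (N - T)"
      by (rule mult_mono[OF a b]) (use p th in auto)
  qed
  also have "\<dots> = exp (2 * real T) * (1 - p) ^ (N - T) * (\<Sum>i\<le>T. (\<theta> * N * p) ^ i / fact i)"
    by (simp add: sum_distrib_left mult_ac)
  also have "\<dots> \<le> exp (2 * real T) * exp (- p * (real N - real T)) * exp (\<theta> * N * p)"
    using q p th by (intro mult_mono sum_power_div_fact_le_exp) (auto intro!: sum_nonneg)
  also have "\<dots> = exp (2 * real T) * exp (p * T - (1 - exp (-2)) * N * p)"
    unfolding \<theta>_def by (simp add: mult.assoc exp_add[symmetric] algebra_simps)
  finally show ?thesis .
qed

lemma binom_cdf_lower:
  assumes p: "0 \<le> p" "p \<le> 1" and j: "j \<le> N"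
  shows "(real N / real j) ^ j * p ^ j * (1 - p) ^ N \<le> binom_cdf N p j"
proof -
  have "(real N / real j) ^ j * p ^ j * (1 - p) ^ N \<le> real (N choose j) * p ^ j * (1 - p) ^ (N - j)"
    using binomial_ge_n_over_k_pow_k[OF j] p
    by (intro mult_mono power_decreasing) auto
  also have "\<dots> \<le> binom_cdf N p j"
    unfolding binom_cdf_def using p by (intro member_le_sum) auto
  finally show ?thesis .
qed

section \<open>Neighbourhoods, stars and cuts\<close>

definition neighbours :: "nat \<Rightarrow> nat set set \<Rightarrow> nat \<Rightarrow> nat set" where
  "neighbours n E v = {w. w < n \<and> {v, w} \<in> E}"

definition star_edges :: "nat \<Rightarrow> nat set \<Rightarrow> nat set set" where
  "star_edges u X = (\<lambda>x. {u, x}) ` X"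

lemma finite_neighbours [simp]: "finite (neighbours n E v)"
  unfolding neighbours_def by auto

lemma inj_on_doubleton: "inj_on (\<lambda>w. {v, w}) X"
  by (rule inj_onI) (auto simp: doubleton_eq_iff)

lemma all_edges_iff: "e \<in> all_edges n \<longleftrightarrow> (\<exists>u v. u < n \<and> v < n \<and> u \<noteq> v \<and> e = {u, v})"
  unfolding all_edges_def by simp

lemma degree_eq_card_neighbours:
  assumes "E \<subseteq> all_edges n"
  shows "degree E v = card (neighbours n E v)"
proof -
  have "{e \<in> E. v \<in> e} = (\<lambda>w. {v, w}) ` neighbours n E v"
  proof
    show "{e \<in> E. v \<in> e} \<subseteq> (\<lambda>w. {v, w}) ` neighbours n E v"
    proof
      fix e assume e: "e \<in> {e \<in> E. v \<in> e}"
      then obtain a b where ab: "a < n" "b < n" "e = {a, b}"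
        using assms all_edges_iff by blast
      then have "e = {v, a} \<and> a < n \<or> e = {v, b} \<and> b < n"
        using e by (auto simp: insert_commute)
      then show "e \<in> (\<lambda>w. {v, w}) ` neighbours n E v"
        using e unfolding neighbours_def by auto
    qed
  qed (auto simp: neighbours_def)
  then show ?thesis unfolding degree_def by (simp add: card_image[OF inj_on_doubleton])
qed

lemma card_cut_edges:
  assumes E: "E \<subseteq> all_edges n" and S: "S \<subseteq> {0..<n}"
  shows "card (cut_edges n E S) = (\<Sum>v\<in>S. card (neighbours n E v - S))"
proof -
  have "cut_edges n E S = (\<Union>v\<in>S. (\<lambda>w. {v, w}) ` (neighbours n E v - S))"
    unfolding cut_edges_def neighbours_def by auto
  also have "card \<dots> = (\<Sum>v\<in>S. card ((\<lambda>w. {v, w}) ` (neighbours n E v - S)))"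
  proof (rule card_UN_disjoint)
    show "finite S" using S finite_subset by blast
  qed (auto simp: doubleton_eq_iff)
  finally show ?thesis by (simp add: card_image[OF inj_on_doubleton])
qed

lemma sum_card_neighbours_Int_swap:
  assumes "X \<subseteq> {0..<n}" "Y \<subseteq> {0..<n}"
  shows "(\<Sum>v\<in>X. card (neighbours n E v \<inter> Y)) = (\<Sum>w\<in>Y. card (neighbours n E w \<inter> X))"
proof -
  have fin: "finite X" "finite Y" using assms finite_subset by blast+
  have count: "card (neighbours n E v \<inter> Z) = (\<Sum>w\<in>Z. if {v, w} \<in> E then 1 else 0)"
    if "Z \<subseteq> {0..<n}" "finite Z" for v Z
  proof -
    have "neighbours n E v \<inter> Z = {w \<in> Z. {v, w} \<in> E}"
      using that unfolding neighbours_def by auto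
    then show ?thesis using that by (simp add: sum.inter_filter[symmetric])
  qed
  have "(\<Sum>v\<in>X. card (neighbours n E v \<inter> Y)) = (\<Sum>v\<in>X. \<Sum>w\<in>Y. if {v, w} \<in> E then 1 else 0)"
    using count assms fin by simp
  also have "\<dots> = (\<Sum>w\<in>Y. \<Sum>v\<in>X. if {w, v} \<in> E then 1 else 0)"
    by (subst sum.swap) (simp add: insert_commute)
  also have "\<dots> = (\<Sum>w\<in>Y. card (neighbours n E w \<inter> X))"
    using count assms fin by simp
  finally show ?thesis .
qed

lemma card_le_mult_if_fibres_le:
  assumes "finite B" "f ` A \<subseteq> B" "\<And>b. b \<in> B \<Longrightarrow> card {a \<in> A. f a = b} \<le> k"
  shows "card A \<le> k * card B"
proof -
  have "A = (\<Union>b\<in>B. {a \<in> A. f a = b})" using assms(2) by auto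
  then have "card A \<le> (\<Sum>b\<in>B. card {a \<in> A. f a = b})"
    using card_UN_le[OF assms(1)] by metis
  also have "\<dots> \<le> (\<Sum>b\<in>B. k)" using assms(3) by (intro sum_mono) auto
  finally show ?thesis by (simp add: mult.commute)
qed

lemma sum_card_neighbours_le_edges:
  assumes E: "E \<subseteq> all_edges n" and H: "H \<subseteq> {0..<n}"
  shows "(\<Sum>v\<in>H. card (neighbours n E v \<inter> H)) \<le> 2 * card {e \<in> E. e \<subseteq> H}"
proof -
  let ?A = "Sigma H (\<lambda>v. neighbours n E v \<inter> H)"
  define f :: "nat \<times> nat \<Rightarrow> nat set" where "f = (\<lambda>(v, w). {v, w})"
  have "finite H" using H finite_subset by blast
  then have "(\<Sum>v\<in>H. card (neighbours n E v \<inter> H)) = card ?A" by simp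
  also have "\<dots> \<le> 2 * card {e \<in> E. e \<subseteq> H}"
  proof (rule card_le_mult_if_fibres_le)
    show "finite {e \<in> E. e \<subseteq> H}"
      using finite_subset[OF E finite_all_edges] by simp
    show "f ` ?A \<subseteq> {e \<in> E. e \<subseteq> H}"
      unfolding f_def neighbours_def by auto
    fix b assume "b \<in> {e \<in> E. e \<subseteq> H}"
    then have "b \<in> all_edges n" using E by blast
    then obtain x y where b: "b = {x, y}" unfolding all_edges_iff by blast
    have "{a \<in> ?A. f a = b} \<subseteq> {(x, y), (y, x)}"
    proof
      fix a assume a: "a \<in> {a \<in> ?A. f a = b}"
      obtain v w where vw: "a = (v, w)" by (cases a) blast
      then have "{v, w} = {x, y}" using a b unfolding f_def by simp
      then show "a \<in> {(x, y), (y, x)}" using vw by (auto simp: doubleton_eq_iff)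
    qed
    then have "card {a \<in> ?A. f a = b} \<le> card {(x, y), (y, x)}"
      by (rule card_mono[rotated]) simp
    also have "\<dots> \<le> 2" by (rule card_insert_le_m1) auto
    finally show "card {a \<in> ?A. f a = b} \<le> 2" .
  qed
  finally show ?thesis .
qed

lemma finite_star_edges [simp]: "finite X \<Longrightarrow> finite (star_edges u X)"
  unfolding star_edges_def by simp

lemma card_star_edges: "card (star_edges u X) = card X"
  unfolding star_edges_def by (rule card_image[OF inj_on_doubleton])

lemma star_edges_disjoint:
  assumes "u \<noteq> w" "u \<notin> Y" "w \<notin> X"
  shows "star_edges u X \<inter> star_edges w Y = {}"
  using assms unfolding star_edges_def by (auto simp: doubleton_eq_iff)

lemma star_edges_subset_all_edges:
  "u < n \<Longrightarrow> X \<subseteq> {0..<n} - {u} \<Longrightarrow> star_edges u X \<subseteq> all_edges n"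
  unfolding star_edges_def all_edges_def by fastforce

lemma degree_eq_card_star_edges:
  assumes E: "E \<subseteq> all_edges n" and u: "u < n"
  shows "degree E u = card (E \<inter> star_edges u ({0..<n} - {u}))"
proof -
  have "{e \<in> E. u \<in> e} = E \<inter> star_edges u ({0..<n} - {u})"
  proof
    show "{e \<in> E. u \<in> e} \<subseteq> E \<inter> star_edges u ({0..<n} - {u})"
    proof
      fix e assume e: "e \<in> {e \<in> E. u \<in> e}"
      then obtain a b where "a < n" "b < n" "a \<noteq> b" "e = {a, b}"
        using E all_edges_iff by blast
      then have "e = {u, b} \<and> b \<in> {0..<n} - {u} \<or> e = {u, a} \<and> a \<in> {0..<n} - {u}"
        using e by (auto simp: insert_commute)
      then show "e \<in> E \<inter> star_edges u ({0..<n} - {u})" using e unfolding star_edges_def by blast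
    qed
  qed (auto simp: star_edges_def)
  then show ?thesis unfolding degree_def by simp
qed

lemma card_star_edges_le_degree:
  assumes "E \<subseteq> all_edges n" "u < n" "X \<subseteq> {0..<n} - {u}"
  shows "card (E \<inter> star_edges u X) \<le> degree E u"
  unfolding degree_eq_card_star_edges[OF assms(1,2)] using assms(3)
  by (intro card_mono) (auto simp: star_edges_def)

lemma degree_le_split:
  assumes E: "E \<subseteq> all_edges n" and a: "a < k" and k: "k \<le> n"
  shows "degree E a \<le> card (E \<inter> star_edges a {k..<n}) + card (E \<inter> star_edges a ({0..<k} - {a}))"
proof -
  have "{0..<n} - {a} = {k..<n} \<union> ({0..<k} - {a})" using a k by auto
  then have "E \<inter> star_edges a ({0..<n} - {a})
      = (E \<inter> star_edges a {k..<n}) \<union> (E \<inter> star_edges a ({0..<k} - {a}))"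
    unfolding star_edges_def by auto
  then show ?thesis using degree_eq_card_star_edges[OF E, of a] a k card_Un_le by simp
qed

lemma min_degree_le: "v < n \<Longrightarrow> min_degree n E \<le> degree E v"
  unfolding min_degree_def by (intro Min_le) auto

section \<open>The deterministic argument\<close>

lemma sum_degree_eq_cut_plus_inside:
  assumes E: "E \<subseteq> all_edges n" and S: "S \<subseteq> {0..<n}"
  shows "(\<Sum>v\<in>S. degree E v) = card (cut_edges n E S) + (\<Sum>v\<in>S. card (neighbours n E v \<inter> S))"
proof -
  have "degree E v = card (neighbours n E v - S) + card (neighbours n E v \<inter> S)" for v
  proof -
    have "neighbours n E v = (neighbours n E v - S) \<union> (neighbours n E v \<inter> S)" by auto
    then have "card (neighbours n E v) = card (neighbours n E v - S) + card (neighbours n E v \<inter> S)"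
      by (metis Diff_disjoint Int_Diff_disjoint card_Un_disjoint finite_Diff finite_Int finite_neighbours inf_commute)
    then show ?thesis using degree_eq_card_neighbours[OF E] by simp
  qed
  then show ?thesis using card_cut_edges[OF E S] by (simp add: sum.distrib)
qed

text \<open>Vertices of degree at most \<open>T\<close> are pairwise at distance at least three: none of them
  has such a neighbour, and every vertex has at most one.  So they add at most \<open>2 |H|\<close> to the
  sum, where \<open>H\<close> is the set of the other vertices of \<open>S\<close>, and by sparsity the edges inside
  \<open>H\<close> add at most \<open>4 |H|\<close>.\<close>

lemma sum_card_neighbours_inside_le:
  assumes E: "E \<subseteq> all_edges n" and S: "S \<subseteq> {0..<n}"
    and sparse: "\<And>H. H \<subseteq> S \<Longrightarrow> card {e \<in> E. e \<subseteq> H} \<le> 2 * card H"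
    and low_nonadjacent: "\<And>u v. u < n \<Longrightarrow> v < n \<Longrightarrow> {u, v} \<in> E \<Longrightarrow>
      degree E u \<le> T \<Longrightarrow> degree E v \<le> T \<Longrightarrow> False"
    and low_no_common_neighbour: "\<And>u v w. u < n \<Longrightarrow> v < n \<Longrightarrow> w < n \<Longrightarrow> u \<noteq> v \<Longrightarrow>
      {u, w} \<in> E \<Longrightarrow> {v, w} \<in> E \<Longrightarrow> degree E u \<le> T \<Longrightarrow> degree E v \<le> T \<Longrightarrow> False"
  shows "(\<Sum>v\<in>S. card (neighbours n E v \<inter> S)) \<le> 6 * card {v \<in> S. T < degree E v}"
proof -
  define N where "N = neighbours n E"
  define H where "H = {v \<in> S. T < degree E v}"
  define L where "L = {v \<in> S. degree E v \<le> T}"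
  have SHL: "S = H \<union> L" "H \<inter> L = {}" "H \<subseteq> S" "L \<subseteq> S"
    unfolding H_def L_def by auto
  have fin: "finite H" "finite L" using SHL S finite_subset by (metis finite_atLeastLessThan)+
  have HL_n: "H \<subseteq> {0..<n}" "L \<subseteq> {0..<n}" using SHL S by auto
  have L_no_L: "N v \<inter> L = {}" if "v \<in> L" for v
  proof -
    have False if "w \<in> N v" "w \<in> L" for w
    proof -
      have "{v, w} \<in> E" "w < n" using that(1) unfolding N_def neighbours_def by auto
      moreover have "v < n" "degree E v \<le> T" "degree E w \<le> T"
        using \<open>v \<in> L\<close> that(2) S unfolding L_def by auto
      ultimately show False using low_nonadjacent by blast
    qed
    then show ?thesis by blast
  qed
  have card_L_le_1: "card (N v \<inter> L) \<le> 1" if "v < n" for v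
  proof -
    have "a = b" if "a \<in> N v \<inter> L" "b \<in> N v \<inter> L" for a b
    proof (rule ccontr)
      assume "a \<noteq> b"
      moreover have "{a, v} \<in> E" "{b, v} \<in> E" "a < n" "b < n"
        using that unfolding N_def neighbours_def by (auto simp: insert_commute)
      moreover have "degree E a \<le> T" "degree E b \<le> T" using that unfolding L_def by auto
      ultimately show False using low_no_common_neighbour \<open>v < n\<close> by blast
    qed
    then show ?thesis using card_le_Suc0_iff_eq[of "N v \<inter> L"] unfolding N_def by auto
  qed
  have split: "card (N v \<inter> S) = card (N v \<inter> H) + card (N v \<inter> L)" for v
  proof -
    have "N v \<inter> S = (N v \<inter> H) \<union> (N v \<inter> L)" using SHL by auto
    then show ?thesis using SHL fin by (simp add: card_Un_disjoint disjoint_iff)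
  qed
  have "(\<Sum>v\<in>S. card (N v \<inter> S)) = (\<Sum>v\<in>H. card (N v \<inter> S)) + (\<Sum>v\<in>L. card (N v \<inter> S))"
    using SHL fin by (simp add: sum.union_disjoint)
  also have "\<dots> = (\<Sum>v\<in>H. card (N v \<inter> H)) + (\<Sum>v\<in>H. card (N v \<inter> L)) + (\<Sum>v\<in>L. card (N v \<inter> H))"
    using L_no_L by (simp add: split sum.distrib)
  also have "(\<Sum>v\<in>L. card (N v \<inter> H)) = (\<Sum>v\<in>H. card (N v \<inter> L))"
    unfolding N_def by (rule sum_card_neighbours_Int_swap[OF HL_n(2,1)])
  also have "(\<Sum>v\<in>H. card (N v \<inter> H)) \<le> 4 * card H"
    using sum_card_neighbours_le_edges[OF E HL_n(1)] sparse[OF SHL(3)] unfolding N_def by linarith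
  also have "(\<Sum>v\<in>H. card (N v \<inter> L)) \<le> card H"
    using sum_mono[of H "\<lambda>v. card (N v \<inter> L)" "\<lambda>_. 1"] card_L_le_1 HL_n by fastforce
  finally show ?thesis unfolding H_def N_def by linarith
qed

lemma min_degree_mult_le_card_cut_edges:
  assumes E: "E \<subseteq> all_edges n" and S: "S \<subseteq> {0..<n}"
    and sparse: "\<And>H. H \<subseteq> S \<Longrightarrow> card {e \<in> E. e \<subseteq> H} \<le> 2 * card H"
    and low_nonadjacent: "\<And>u v. u < n \<Longrightarrow> v < n \<Longrightarrow> {u, v} \<in> E \<Longrightarrow>
      degree E u \<le> T \<Longrightarrow> degree E v \<le> T \<Longrightarrow> False"
    and low_no_common_neighbour: "\<And>u v w. u < n \<Longrightarrow> v < n \<Longrightarrow> w < n \<Longrightarrow> u \<noteq> v \<Longrightarrow>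
      {u, w} \<in> E \<Longrightarrow> {v, w} \<in> E \<Longrightarrow> degree E u \<le> T \<Longrightarrow> degree E v \<le> T \<Longrightarrow> False"
    and T: "min_degree n E + 5 \<le> T"
  shows "min_degree n E * card S \<le> card (cut_edges n E S)"
proof -
  let ?\<delta> = "min_degree n E" and ?H = "{v \<in> S. T < degree E v}"
  have fin: "finite S" using S finite_subset by blast
  have "?\<delta> * card S + 6 * card ?H = (\<Sum>v\<in>S. ?\<delta> + (if T < degree E v then 6 else 0))"
    using sum.inter_filter[OF fin, of "\<lambda>_. 6 :: nat" "\<lambda>v. T < degree E v"] by (simp add: sum.distrib)
  also have "\<dots> \<le> (\<Sum>v\<in>S. degree E v)"
  proof (rule sum_mono)
    fix v assume "v \<in> S"
    then have "?\<delta> \<le> degree E v" using S by (intro min_degree_le) auto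
    then show "?\<delta> + (if T < degree E v then 6 else 0) \<le> degree E v" using T by auto
  qed
  also have "\<dots> = card (cut_edges n E S) + (\<Sum>v\<in>S. card (neighbours n E v \<inter> S))"
    by (rule sum_degree_eq_cut_plus_inside[OF E S])
  moreover have "(\<Sum>v\<in>S. card (neighbours n E v \<inter> S)) \<le> 6 * card ?H"
    using E S sparse low_nonadjacent low_no_common_neighbour by (rule sum_card_neighbours_inside_le)
  ultimately show ?thesis by linarith
qed

section \<open>Union bounds for the bad events\<close>

definition has_dense_set :: "nat \<Rightarrow> nat \<Rightarrow> nat set set \<Rightarrow> bool" where
  "has_dense_set n K E \<longleftrightarrow> (\<exists>H\<subseteq>{0..<n}. card H \<le> K \<and> 2 * card H < card {e \<in> E. e \<subseteq> H})"

definition has_adjacent_low_pair :: "nat \<Rightarrow> nat \<Rightarrow> nat set set \<Rightarrow> bool" where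
  "has_adjacent_low_pair n T E \<longleftrightarrow>
    (\<exists>u<n. \<exists>v<n. u \<noteq> v \<and> {u, v} \<in> E \<and> degree E u \<le> T \<and> degree E v \<le> T)"

definition has_low_pair_common_neighbour :: "nat \<Rightarrow> nat \<Rightarrow> nat set set \<Rightarrow> bool" where
  "has_low_pair_common_neighbour n T E \<longleftrightarrow>
    (\<exists>w<n. \<exists>u<n. \<exists>v<n. u \<noteq> v \<and> {u, w} \<in> E \<and> {v, w} \<in> E \<and> degree E u \<le> T \<and> degree E v \<le> T)"

definition all_many_edges_out :: "nat \<Rightarrow> nat \<Rightarrow> nat \<Rightarrow> nat set set \<Rightarrow> bool" where
  "all_many_edges_out n k j E \<longleftrightarrow> (\<forall>a<k. j < card (E \<inter> star_edges a {k..<n}))"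

definition has_many_edges_inside :: "nat \<Rightarrow> nat \<Rightarrow> nat set set \<Rightarrow> bool" where
  "has_many_edges_inside k R E \<longleftrightarrow> (\<exists>a<k. R \<le> card (E \<inter> star_edges a ({0..<k} - {a})))"

lemma subset_prob_Bex_le_card_mult:
  assumes "0 \<le> p" "p \<le> 1" "finite I" "card I \<le> m" "0 \<le> b"
    and "\<And>i. i \<in> I \<Longrightarrow> subset_prob p A (P i) \<le> b"
  shows "subset_prob p A (\<lambda>E. \<exists>i\<in>I. P i E) \<le> real m * b"
proof -
  have "subset_prob p A (\<lambda>E. \<exists>i\<in>I. P i E) \<le> (\<Sum>i\<in>I. subset_prob p A (P i))"
    by (rule subset_prob_Bex_le[OF assms(1-3)])
  also have "\<dots> \<le> real (card I) * b" using sum_mono[of I _ "\<lambda>_. b"] assms(6) by simp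
  also have "\<dots> \<le> real m * b" using assms(4,5) by (intro mult_right_mono) auto
  finally show ?thesis .
qed

lemma card_edges_within_le: "finite H \<Longrightarrow> card {e \<in> all_edges n. e \<subseteq> H} \<le> card H ^ 2"
proof -
  assume fin: "finite H"
  have "{e \<in> all_edges n. e \<subseteq> H} \<subseteq> (\<lambda>(a, b). {a, b}) ` (H \<times> H)"
    unfolding all_edges_def by auto
  then have "card {e \<in> all_edges n. e \<subseteq> H} \<le> card ((\<lambda>(a, b). {a, b}) ` (H \<times> H))"
    using fin by (intro card_mono) auto
  also have "\<dots> \<le> card (H \<times> H)" by (rule card_image_le) (use fin in auto)
  finally show ?thesis by (simp add: power2_eq_square card_cartesian_product)
qed

lemma sum_subsets_by_card:
  assumes "finite V"
  shows "(\<Sum>H\<in>{H. H \<subseteq> V \<and> card H \<le> K}. f (card H)) = (\<Sum>s\<le>K. real (card V choose s) * f s)"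
proof -
  have "{H. H \<subseteq> V \<and> card H \<le> K} = (\<Union>s\<le>K. {H. H \<subseteq> V \<and> card H = s})" by auto
  then have "(\<Sum>H\<in>{H. H \<subseteq> V \<and> card H \<le> K}. f (card H))
      = (\<Sum>H\<in>(\<Union>s\<le>K. {H. H \<subseteq> V \<and> card H = s}). f (card H))"
    by simp
  also have "\<dots> = (\<Sum>s\<le>K. \<Sum>H\<in>{H. H \<subseteq> V \<and> card H = s}. f (card H))"
    by (rule sum.UNION_disjoint) (auto simp: assms intro: finite_subset)
  also have "\<dots> = (\<Sum>s\<le>K. real (card V choose s) * f s)"
  proof (rule sum.cong[OF refl])
    fix s
    have "(\<Sum>H\<in>{H. H \<subseteq> V \<and> card H = s}. f (card H)) = (\<Sum>H\<in>{H. H \<subseteq> V \<and> card H = s}. f s)"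
      by (rule sum.cong) auto
    then show "(\<Sum>H\<in>{H. H \<subseteq> V \<and> card H = s}. f (card H)) = real (card V choose s) * f s"
      using n_subsets[OF assms, of s] by simp
  qed
  finally show ?thesis .
qed

text \<open>A set of \<open>s\<close> vertices spanning more than \<open>2 s\<close> edges contains \<open>2 s + 1\<close> of the at
  most \<open>s\<^sup>2\<close> pairs inside it.\<close>

lemma prob_dense_set_le:
  assumes p: "0 \<le> p" "p \<le> 1"
  shows "subset_prob p (all_edges n) (has_dense_set n K)
    \<le> (\<Sum>s\<le>K. real (n choose s) * real (s ^ 2 choose (2 * s + 1)) * p ^ (2 * s + 1))"
proof -
  define inside where "inside H = {e \<in> all_edges n. e \<subseteq> H}" for H
  define \<H> where "\<H> = {H. H \<subseteq> {0..<n} \<and> card H \<le> K}"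
  define I where "I = Sigma \<H> (\<lambda>H. {F. F \<subseteq> inside H \<and> card F = 2 * card H + 1})"
  have fin_\<H>: "finite \<H>" unfolding \<H>_def by (rule finite_subset[of _ "Pow {0..<n}"]) auto
  have fin_inside: "finite (inside H)" for H
    unfolding inside_def using finite_all_edges by simp
  have "subset_prob p (all_edges n) (has_dense_set n K)
    \<le> subset_prob p (all_edges n) (\<lambda>E. \<exists>i\<in>I. snd i \<subseteq> E)"
  proof (rule subset_prob_mono[OF p])
    fix E assume E: "E \<subseteq> all_edges n" and "has_dense_set n K E"
    then obtain H where H: "H \<in> \<H>" "2 * card H + 1 \<le> card {e \<in> E. e \<subseteq> H}"
      unfolding \<H>_def has_dense_set_def by auto
    then obtain F where F: "F \<subseteq> {e \<in> E. e \<subseteq> H}" "card F = 2 * card H + 1"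
      by (meson obtain_subset_with_card_n)
    then have "(H, F) \<in> I" using H E unfolding I_def inside_def by auto
    then show "\<exists>i\<in>I. snd i \<subseteq> E" using F by force
  qed
  also have "\<dots> \<le> (\<Sum>i\<in>I. subset_prob p (all_edges n) (\<lambda>E. snd i \<subseteq> E))"
    by (rule subset_prob_Bex_le[OF p]) (simp add: I_def fin_\<H> fin_inside)
  also have "\<dots> = (\<Sum>(H, F)\<in>I. p ^ (2 * card H + 1))"
  proof (rule sum.cong[OF refl])
    fix i assume "i \<in> I"
    then obtain H F where i: "i = (H, F)" "F \<subseteq> inside H" "card F = 2 * card H + 1"
      unfolding I_def by auto
    then have "F \<subseteq> all_edges n" unfolding inside_def by auto
    then show "subset_prob p (all_edges n) (\<lambda>E. snd i \<subseteq> E) = (case i of (H, F) \<Rightarrow> p ^ (2 * card H + 1))"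
      using subset_prob_superset[OF finite_all_edges, of F n p] i by simp
  qed
  also have "\<dots> = (\<Sum>H\<in>\<H>. real (card (inside H) choose (2 * card H + 1)) * p ^ (2 * card H + 1))"
    unfolding I_def using fin_\<H> fin_inside by (simp add: sum.Sigma[symmetric] n_subsets)
  also have "\<dots> \<le> (\<Sum>H\<in>\<H>. real (card H ^ 2 choose (2 * card H + 1)) * p ^ (2 * card H + 1))"
  proof (rule sum_mono)
    fix H assume "H \<in> \<H>"
    then have "finite H" unfolding \<H>_def using finite_subset[of H "{0..<n}"] by auto
    then have "card (inside H) choose (2 * card H + 1) \<le> card H ^ 2 choose (2 * card H + 1)"
      unfolding inside_def by (intro binomial_right_mono card_edges_within_le)
    then show "real (card (inside H) choose (2 * card H + 1)) * p ^ (2 * card H + 1)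
        \<le> real (card H ^ 2 choose (2 * card H + 1)) * p ^ (2 * card H + 1)"
      using p by (intro mult_right_mono) auto
  qed
  also have "\<dots> = (\<Sum>s\<le>K. real (n choose s) * real (s ^ 2 choose (2 * s + 1)) * p ^ (2 * s + 1))"
    unfolding \<H>_def using sum_subsets_by_card[of "{0..<n}" "\<lambda>s. real (s ^ 2 choose (2 * s + 1)) * p ^ (2 * s + 1)" K]
    by (simp add: mult.assoc)
  finally show ?thesis .
qed

text \<open>Two distinct vertices \<open>u, v\<close> of degree at most \<open>T\<close> each have at most \<open>T\<close> edges to the
  vertices outside a set \<open>Z \<ni> u, v\<close>; these two stars and a fixed edge set \<open>F\<close> inside \<open>Z\<close> are
  pairwise disjoint, so the three events are independent.\<close>

lemma prob_low_degree_pair_le: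
  assumes p: "0 \<le> p" "p \<le> 1" and uv: "u \<noteq> v" "u \<in> Z" "v \<in> Z" and Z: "Z \<subseteq> {0..<n}"
    and F: "F \<subseteq> all_edges n" "\<And>e. e \<in> F \<Longrightarrow> e \<subseteq> Z"
  shows "subset_prob p (all_edges n) (\<lambda>E. F \<subseteq> E \<and> degree E u \<le> T \<and> degree E v \<le> T)
    \<le> p ^ card F * binom_cdf (n - card Z) p T ^ 2"
proof -
  define A where "A = all_edges n"
  define R where "R = {0..<n} - Z"
  define star where "star x = star_edges x R" for x
  have star_A: "star x \<subseteq> A" if "x \<in> Z" for x
    unfolding star_def A_def R_def using that Z by (intro star_edges_subset_all_edges) auto
  have star_F: "star x \<inter> F = {}" for x
    using F(2) unfolding star_def star_edges_def R_def by auto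
  have fin_R: "finite R" and card_R: "card R = n - card Z"
    unfolding R_def using Z by (simp_all add: card_Diff_subset finite_subset)
  have "subset_prob p A (\<lambda>E. F \<subseteq> E \<and> degree E u \<le> T \<and> degree E v \<le> T)
      \<le> subset_prob p A (\<lambda>E. F \<subseteq> E \<inter> F \<and> (\<forall>x\<in>{u, v}. card ((E - F) \<inter> star x) \<le> T))"
  proof (rule subset_prob_mono[OF p])
    fix E assume E: "E \<subseteq> A" and low: "F \<subseteq> E \<and> degree E u \<le> T \<and> degree E v \<le> T"
    have "card ((E - F) \<inter> star x) \<le> T" if "x \<in> {u, v}" for x
    proof -
      have "(E - F) \<inter> star x = E \<inter> star x" using star_F by blast
      also have "card \<dots> \<le> degree E x"
        unfolding star_def R_def using E that uv Z A_def
        by (intro card_star_edges_le_degree) auto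
      finally show ?thesis using low that by auto
    qed
    then show "F \<subseteq> E \<inter> F \<and> (\<forall>x\<in>{u, v}. card ((E - F) \<inter> star x) \<le> T)" using low by auto
  qed
  also have "\<dots> = subset_prob p F (\<lambda>X. F \<subseteq> X) *
      subset_prob p (A - F) (\<lambda>Y. \<forall>x\<in>{u, v}. card (Y \<inter> star x) \<le> T)"
    using F(1) unfolding A_def by (intro subset_prob_indep finite_all_edges)
  also have "subset_prob p F (\<lambda>X. F \<subseteq> X) = p ^ card F"
    using finite_subset[OF F(1) finite_all_edges] by (intro subset_prob_superset) auto
  also have "subset_prob p (A - F) (\<lambda>Y. \<forall>x\<in>{u, v}. card (Y \<inter> star x) \<le> T)
      = (\<Prod>x\<in>{u, v}. subset_prob p (star x) (\<lambda>X. card X \<le> T))"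
  proof (rule subset_prob_indep_family)
    show "finite (A - F)" unfolding A_def using finite_all_edges by simp
    show "star x \<subseteq> A - F" if "x \<in> {u, v}" for x using star_A star_F that uv by blast
    show "star x \<inter> star y = {}" if "x \<in> {u, v}" "y \<in> {u, v}" "x \<noteq> y" for x y
      unfolding star_def R_def using that uv by (intro star_edges_disjoint) auto
  qed simp
  also have "\<dots> = binom_cdf (n - card Z) p T ^ 2"
    using uv fin_R by (simp add: subset_prob_card_le star_def card_star_edges card_R power2_eq_square)
  finally show ?thesis unfolding A_def .
qed

lemma prob_adjacent_low_pair_le:
  assumes p: "0 \<le> p" "p \<le> 1"
  shows "subset_prob p (all_edges n) (has_adjacent_low_pair n T) \<le> real n ^ 2 * (p * binom_cdf (n - 2) p T ^ 2)"
proof -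
  define I where "I = {(u, v). u < n \<and> v < n \<and> u \<noteq> v}"
  define P where "P = (\<lambda>(u, v) E. {{u, v}} \<subseteq> E \<and> degree E u \<le> T \<and> degree E v \<le> T)"
  have I: "I \<subseteq> {0..<n} \<times> {0..<n}" unfolding I_def by auto
  have "subset_prob p (all_edges n) (has_adjacent_low_pair n T)
    = subset_prob p (all_edges n) (\<lambda>E. \<exists>i\<in>I. P i E)"
    by (intro subset_prob_cong) (auto simp: I_def P_def has_adjacent_low_pair_def)
  also have "\<dots> \<le> real (n ^ 2) * (p * binom_cdf (n - 2) p T ^ 2)"
  proof (rule subset_prob_Bex_le_card_mult[OF p])
    show "finite I" "card I \<le> n ^ 2"
      using finite_subset[OF I] card_mono[OF _ I] by (auto simp: power2_eq_square card_cartesian_product)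
    show "0 \<le> p * binom_cdf (n - 2) p T ^ 2" using p binom_cdf_nonneg by simp
    fix i assume "i \<in> I"
    then obtain u v where i: "i = (u, v)" "u < n" "v < n" "u \<noteq> v" unfolding I_def by blast
    have "subset_prob p (all_edges n) (\<lambda>E. {{u, v}} \<subseteq> E \<and> degree E u \<le> T \<and> degree E v \<le> T)
        \<le> p ^ card {{u, v}} * binom_cdf (n - card {u, v}) p T ^ 2"
      using i by (intro prob_low_degree_pair_le[OF p]) (auto simp: all_edges_def)
    then show "subset_prob p (all_edges n) (P i) \<le> p * binom_cdf (n - 2) p T ^ 2"
      unfolding P_def using i by (simp add: numeral_2_eq_2)
  qed
  finally show ?thesis by simp
qed

lemma prob_low_pair_common_neighbour_le:
  assumes p: "0 \<le> p" "p \<le> 1"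
  shows "subset_prob p (all_edges n) (has_low_pair_common_neighbour n T) \<le> real n ^ 3 * (p ^ 2 * binom_cdf (n - 3) p T ^ 2)"
proof -
  define I where "I = {(w, u, v). w < n \<and> u < n \<and> v < n \<and> u \<noteq> v \<and> u \<noteq> w \<and> v \<noteq> w}"
  define P where "P = (\<lambda>(w, u, v) E. {{u, w}, {v, w}} \<subseteq> E \<and> degree E u \<le> T \<and> degree E v \<le> T)"
  have I: "I \<subseteq> {0..<n} \<times> {0..<n} \<times> {0..<n}" unfolding I_def by auto
  have "subset_prob p (all_edges n) (has_low_pair_common_neighbour n T)
    = subset_prob p (all_edges n) (\<lambda>E. \<exists>i\<in>I. P i E)"
  proof (rule subset_prob_cong)
    fix E assume E: "E \<subseteq> all_edges n"
    have distinct: "x \<noteq> y" if "{x, y} \<in> E" for x y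
      using that E unfolding all_edges_def by (auto simp: doubleton_eq_iff)
    show "has_low_pair_common_neighbour n T E \<longleftrightarrow> (\<exists>i\<in>I. P i E)"
      unfolding has_low_pair_common_neighbour_def
    proof
      assume "\<exists>w<n. \<exists>u<n. \<exists>v<n. u \<noteq> v \<and> {u, w} \<in> E \<and> {v, w} \<in> E \<and> degree E u \<le> T \<and> degree E v \<le> T"
      then obtain w u v where "w < n" "u < n" "v < n" "u \<noteq> v" "{u, w} \<in> E" "{v, w} \<in> E"
        "degree E u \<le> T" "degree E v \<le> T" by blast
      moreover have "u \<noteq> w" "v \<noteq> w" using distinct calculation by auto
      ultimately show "\<exists>i\<in>I. P i E" unfolding I_def P_def by (intro bexI[of _ "(w, u, v)"]) auto
    qed (auto simp: I_def P_def)
  qed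
  also have "\<dots> \<le> real (n ^ 3) * (p ^ 2 * binom_cdf (n - 3) p T ^ 2)"
  proof (rule subset_prob_Bex_le_card_mult[OF p])
    show "finite I" "card I \<le> n ^ 3"
      using finite_subset[OF I] card_mono[OF _ I] by (auto simp: power3_eq_cube card_cartesian_product)
    show "0 \<le> p ^ 2 * binom_cdf (n - 3) p T ^ 2" using p binom_cdf_nonneg by simp
    fix i assume "i \<in> I"
    then obtain w u v where i: "i = (w, u, v)" "w < n" "u < n" "v < n" "u \<noteq> v" "u \<noteq> w" "v \<noteq> w"
      unfolding I_def by blast
    have "subset_prob p (all_edges n)
        (\<lambda>E. {{u, w}, {v, w}} \<subseteq> E \<and> degree E u \<le> T \<and> degree E v \<le> T)
      \<le> p ^ card {{u, w}, {v, w}} * binom_cdf (n - card {u, v, w}) p T ^ 2"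
      using i by (intro prob_low_degree_pair_le[OF p]) (auto simp: all_edges_def)
    then show "subset_prob p (all_edges n) (P i) \<le> p ^ 2 * binom_cdf (n - 3) p T ^ 2"
      unfolding P_def using i by (simp add: doubleton_eq_iff numeral_3_eq_3 power2_eq_square)
  qed
  finally show ?thesis by simp
qed

lemma prob_all_many_edges_out:
  assumes p: "0 \<le> p" "p \<le> 1" and k: "k \<le> n"
  shows "subset_prob p (all_edges n) (all_many_edges_out n k j) = (1 - binom_cdf (n - k) p j) ^ k"
proof -
  have "subset_prob p (all_edges n) (all_many_edges_out n k j)
      = subset_prob p (all_edges n) (\<lambda>E. \<forall>a\<in>{0..<k}. j < card (E \<inter> star_edges a {k..<n}))"
    by (intro subset_prob_cong) (auto simp: all_many_edges_out_def)
  also have "\<dots> = (\<Prod>a\<in>{0..<k}. subset_prob p (star_edges a {k..<n}) (\<lambda>X. j < card X))"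
    using k by (intro subset_prob_indep_family finite_all_edges star_edges_subset_all_edges star_edges_disjoint) auto
  also have "\<dots> = (\<Prod>a\<in>{0..<k}. 1 - binom_cdf (n - k) p j)"
  proof (rule prod.cong[OF refl])
    fix a
    have "subset_prob p (star_edges a {k..<n}) (\<lambda>X. j < card X)
        = subset_prob p (star_edges a {k..<n}) (\<lambda>X. \<not> card X \<le> j)"
      by (simp add: not_le)
    then show "subset_prob p (star_edges a {k..<n}) (\<lambda>X. j < card X) = 1 - binom_cdf (n - k) p j"
      by (simp add: subset_prob_not subset_prob_card_le card_star_edges)
  qed
  finally show ?thesis by simp
qed

lemma prob_many_edges_inside_le:
  assumes p: "0 \<le> p" "p \<le> 1" and k: "k \<le> n"
  shows "subset_prob p (all_edges n) (has_many_edges_inside k R) \<le> real k * (real ((k - 1) choose R) * p ^ R)"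
proof -
  define X where "X a = star_edges a ({0..<k} - {a})" for a
  define I where "I = Sigma {0..<k} (\<lambda>a. {F. F \<subseteq> X a \<and> card F = R})"
  have fin_X: "finite (X a)" for a unfolding X_def by simp
  have card_X: "card (X a) = k - 1" if "a < k" for a
    unfolding X_def using that by (simp add: card_star_edges)
  have card_I: "card I = k * ((k - 1) choose R)"
  proof -
    have "card I = (\<Sum>a\<in>{0..<k}. card {F. F \<subseteq> X a \<and> card F = R})"
      unfolding I_def by (rule card_SigmaI) (use fin_X in auto)
    also have "\<dots> = (\<Sum>a\<in>{0..<k}. (k - 1) choose R)"
      by (rule sum.cong[OF refl]) (simp add: n_subsets[OF fin_X] card_X)
    finally show ?thesis by simp
  qed
  have "subset_prob p (all_edges n) (has_many_edges_inside k R)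
      \<le> subset_prob p (all_edges n) (\<lambda>E. \<exists>i\<in>I. snd i \<subseteq> E)"
  proof (rule subset_prob_mono[OF p])
    fix E assume "has_many_edges_inside k R E"
    then obtain a where "a < k" "R \<le> card (E \<inter> X a)"
      unfolding has_many_edges_inside_def X_def by blast
    moreover obtain F where "F \<subseteq> E \<inter> X a" "card F = R"
      using obtain_subset_with_card_n[OF \<open>R \<le> card (E \<inter> X a)\<close>] by blast
    ultimately show "\<exists>i\<in>I. snd i \<subseteq> E" unfolding I_def by (intro bexI[of _ "(a, F)"]) auto
  qed
  also have "\<dots> \<le> real (card I) * p ^ R"
  proof (rule subset_prob_Bex_le_card_mult[OF p])
    show "finite I" unfolding I_def using fin_X by simp
    fix i assume "i \<in> I"
    then obtain a F where i: "i = (a, F)" "a < k" "F \<subseteq> X a" "card F = R" unfolding I_def by auto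
    have "X a \<subseteq> all_edges n" unfolding X_def using i k by (intro star_edges_subset_all_edges) auto
    then show "subset_prob p (all_edges n) (\<lambda>E. snd i \<subseteq> E) \<le> p ^ R"
      using subset_prob_superset[OF finite_all_edges, of F n p] i by auto
  qed (use p in auto)
  finally show ?thesis unfolding card_I by simp
qed

section \<open>Estimates of the union bounds\<close>

lemma dense_set_term_le:
  fixes p :: real
  assumes p: "0 \<le> p" and s: "1 \<le> s" and sp: "exp 1 * s * p / 2 \<le> 1"
  shows "real (n choose s) * real (s ^ 2 choose (2 * s + 1)) * p ^ (2 * s + 1)
    \<le> (exp 3 * n * s * p ^ 2 / 4) ^ s"
proof -
  define m where "m = 2 * s + 1"
  have spos: "0 < real s" and mpos: "0 < real m" using s unfolding m_def by simp_all
  have n_choose: "real (n choose s) \<le> (exp 1 * n / s) ^ s"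
  proof -
    have "real (n choose s) \<le> real n ^ s / fact s" by (rule binomial_le_power_div_fact)
    also have "\<dots> \<le> real n ^ s / (real s ^ s / exp (real s))"
      using power_div_exp_le_fact[of s] spos by (intro divide_left_mono) auto
    also have "\<dots> = (exp 1 * n / s) ^ s"
      by (simp add: power_divide power_mult_distrib exp_of_nat_mult[symmetric] field_simps)
    finally show ?thesis .
  qed
  have pairs_choose: "real (s ^ 2 choose m) \<le> (exp 1 * s / 2) ^ m"
  proof -
    have "real (s ^ 2 choose m) \<le> (real s ^ 2) ^ m / fact m"
      using binomial_le_power_div_fact[of "s ^ 2" m] by simp
    also have "\<dots> \<le> (real s ^ 2) ^ m / (real m ^ m / exp (real m))"
      using power_div_exp_le_fact[of m] mpos by (intro divide_left_mono) auto
    also have "\<dots> = (exp 1 * s ^ 2 / m) ^ m"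
      by (simp add: power_divide power_mult_distrib exp_of_nat_mult[symmetric] field_simps)
    also have "\<dots> \<le> (exp 1 * s / 2) ^ m"
    proof (rule power_mono)
      have "real s ^ 2 / real m \<le> real s / 2"
        unfolding m_def using spos by (simp add: field_simps power2_eq_square)
      then show "exp 1 * s ^ 2 / m \<le> exp 1 * s / 2"
        using mult_left_mono[of "real s ^ 2 / real m" "real s / 2" "exp 1"] by (simp add: mult.assoc)
    qed simp
    finally show ?thesis .
  qed
  have "(exp 1 * s / 2) ^ m * p ^ m = ((exp 1 * s * p / 2) ^ 2) ^ s * (exp 1 * s * p / 2)"
    unfolding m_def by (simp add: power_mult_distrib[symmetric] power_mult[symmetric] power_add)
  also have "\<dots> \<le> ((exp 1 * s * p / 2) ^ 2) ^ s"
    using sp p by (intro mult_left_le) auto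
  finally have pairs: "real (s ^ 2 choose m) * p ^ m \<le> ((exp 1 * s * p / 2) ^ 2) ^ s"
    using pairs_choose p by (meson mult_right_mono order_trans zero_le_power)
  have "real (n choose s) * real (s ^ 2 choose m) * p ^ m
      = real (n choose s) * (real (s ^ 2 choose m) * p ^ m)" by simp
  also have "\<dots> \<le> (exp 1 * n / s) ^ s * ((exp 1 * s * p / 2) ^ 2) ^ s"
    using n_choose pairs p by (intro mult_mono) auto
  also have "\<dots> = (exp 1 * n / s * (exp 1 * s * p / 2) ^ 2) ^ s" by (rule power_mult_distrib[symmetric])
  also have "exp 1 * n / s * (exp 1 * s * p / 2) ^ 2 = exp 3 * n * s * p ^ 2 / 4"
  proof -
    have "exp (3::real) = exp 1 ^ 3" by (simp add: exp_of_nat_mult[symmetric])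
    then show ?thesis using spos by (simp add: power2_eq_square power3_eq_cube field_simps)
  qed
  finally show ?thesis unfolding m_def .
qed

lemma sum_atMost_le_if_geometric:
  fixes a :: "nat \<Rightarrow> real"
  assumes r: "0 \<le> r" "r \<le> 1/2" and a0: "a 0 \<le> 0" and a: "\<And>s. 1 \<le> s \<Longrightarrow> s \<le> K \<Longrightarrow> a s \<le> r ^ s"
  shows "(\<Sum>s\<le>K. a s) \<le> 2 * r"
proof -
  have "(\<Sum>s\<le>K. a s) = a 0 + (\<Sum>s\<in>{1..K}. a s)"
    by (simp add: atMost_atLeast0 sum.atLeast_Suc_atMost)
  also have "\<dots> \<le> (\<Sum>s\<in>{1..K}. r ^ s)"
    using a0 sum_mono[of "{1..K}" a "\<lambda>s. r ^ s"] a by force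
  also have "\<dots> = (\<Sum>s\<le>K. r ^ s) - 1"
    by (simp add: atMost_atLeast0 sum.atLeast_Suc_atMost)
  also have "(\<Sum>s\<le>K. r ^ s) \<le> (\<Sum>s. r ^ s)"
    using r by (intro sum_le_suminf summable_geometric) auto
  also have "(\<Sum>s. r ^ s) = 1 / (1 - r)" using r by (intro suminf_geometric) auto
  also have "1 / (1 - r) - 1 \<le> 2 * r"
    using r mult_left_mono[of "r * 2" 1 r] by (simp add: field_simps)
  finally show ?thesis by simp
qed

lemma prob_dense_set_le_geometric:
  assumes p: "0 \<le> p" "p \<le> 1"
    and \<rho>: "exp 3 * n * K * p ^ 2 / 4 \<le> 1/2" and Kp: "exp 1 * K * p / 2 \<le> 1"
  shows "subset_prob p (all_edges n) (has_dense_set n K) \<le> exp 3 * n * K * p ^ 2 / 2"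
proof -
  let ?\<rho> = "exp 3 * n * K * p ^ 2 / 4"
  have "(\<Sum>s\<le>K. real (n choose s) * real (s ^ 2 choose (2 * s + 1)) * p ^ (2 * s + 1)) \<le> 2 * ?\<rho>"
  proof (rule sum_atMost_le_if_geometric[OF _ \<rho>])
    fix s assume s: "1 \<le> s" "s \<le> K"
    have "exp 1 * s * p / 2 \<le> exp 1 * K * p / 2"
      using s p by (intro divide_right_mono mult_right_mono) auto
    then have "real (n choose s) * real (s ^ 2 choose (2 * s + 1)) * p ^ (2 * s + 1)
        \<le> (exp 3 * n * s * p ^ 2 / 4) ^ s"
      using Kp by (intro dense_set_term_le[OF p(1) s(1)]) linarith
    also have "\<dots> \<le> ?\<rho> ^ s"
      using s p by (intro power_mono divide_right_mono mult_right_mono mult_left_mono) auto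
    finally show "real (n choose s) * real (s ^ 2 choose (2 * s + 1)) * p ^ (2 * s + 1) \<le> ?\<rho> ^ s" .
  qed (use p in auto)
  then show ?thesis using prob_dense_set_le[OF p, of n K] by linarith
qed

lemma binom_cdf_small_le:
  fixes p L :: real and n N T :: nat
  assumes p: "0 \<le> p" "p \<le> 1" and L: "L \<le> n * p" and N: "n \<le> N + 3" and T: "T \<le> N"
    and T_le: "real T \<le> n * p / 10 + 24" and pT: "p * T \<le> 1"
  shows "binom_cdf N p T \<le> exp (52 - 13/20 * L)"
proof -
  have "binom_cdf N p T \<le> exp (2 * real T) * exp (p * T - (1 - exp (-2)) * N * p)"
    by (rule binom_cdf_upper[OF p T])
  also have "\<dots> = exp (2 * real T + p * T - (1 - exp (-2)) * N * p)" by (simp add: exp_add[symmetric])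
  also have "\<dots> \<le> exp (52 - 13/20 * L)"
  proof (subst exp_le_cancel_iff)
    have "(6/7) * (real N * p) \<le> (1 - exp (-2)) * (real N * p)"
      using exp_minus_2_le p by (intro mult_right_mono) auto
    then have A1: "(6/7) * (real N * p) \<le> (1 - exp (-2)) * real N * p" by (simp add: mult.assoc)
    have "(real n - 3) * p \<le> real N * p" using N p by (intro mult_right_mono) auto
    then have A2: "real n * p - 3 \<le> real N * p" using p by (simp add: algebra_simps)
    have A3: "0 \<le> real n * p" using p by simp
    show "2 * real T + p * T - (1 - exp (-2)) * N * p \<le> 52 - 13/20 * L"
      using T_le pT L A1 A2 A3 by linarith
  qed
  finally show ?thesis .
qed

lemma binom_cdf_at_tenth_ge:
  fixes p :: real
  assumes p: "0 \<le> p" "p \<le> 1/2" and j: "j = nat \<lfloor>n * p / 10\<rfloor>" and j1: "1 \<le> j"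
    and k: "real k \<le> n / 10" and jk: "j \<le> n - k" and np2: "2 * n * p ^ 2 \<le> 1"
  shows "exp (- 0.8 * n * p - 3) \<le> binom_cdf (n - k) p j"
proof -
  define N where "N = n - k"
  have RN: "real N = real n - real k" unfolding N_def using k by simp
  have jle: "real j \<le> n * p / 10" using j p by simp linarith
  have jge: "n * p / 10 - 1 \<le> real j" using j by linarith
  have jpos: "0 < real j" using j1 by simp
  have "exp (2 * real j) \<le> 9 ^ j"
  proof -
    have "exp 1 ^ 2 \<le> (3::real) ^ 2" using exp_le by (intro power_mono) auto
    then have "(exp 1 ^ 2) ^ j \<le> (9::real) ^ j" by (intro power_mono) auto
    then show ?thesis by (simp add: exp_of_nat_mult[symmetric] power_mult[symmetric] mult.commute)
  qed
  also have "\<dots> \<le> (real N * p / real j) ^ j"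
  proof (rule power_mono)
    have "9/10 * real n * p \<le> real N * p" using RN k p by (intro mult_right_mono) auto
    then show "9 \<le> real N * p / real j" using jle jpos by (simp add: field_simps)
  qed simp
  also have "\<dots> = (real N / real j) ^ j * p ^ j" by (simp add: power_mult_distrib power_divide)
  finally have first: "exp (2 * real j) \<le> (real N / real j) ^ j * p ^ j" .
  have "exp (- n * p - 1) \<le> exp (real n * (- p - 2 * p ^ 2))"
    using np2 by (simp add: algebra_simps)
  also have "\<dots> \<le> exp (real n * ln (1 - p))"
    using p ln_one_minus_pos_lower_bound[of p] by (intro exp_mono mult_left_mono) auto
  also have "\<dots> = (1 - p) ^ n" using p by (simp add: exp_of_nat_mult)
  also have "\<dots> \<le> (1 - p) ^ N" unfolding N_def using p by (intro power_decreasing) auto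
  finally have second: "exp (- n * p - 1) \<le> (1 - p) ^ N" .
  have "exp (- 0.8 * n * p - 3) \<le> exp (2 * real j) * exp (- n * p - 1)"
    unfolding exp_add[symmetric] using jge by simp
  also have "\<dots> \<le> (real N / real j) ^ j * p ^ j * (1 - p) ^ N"
    using first second p by (intro mult_mono) auto
  also have "\<dots> \<le> binom_cdf N p j"
    by (rule binom_cdf_lower) (use p jk N_def in auto)
  finally show ?thesis unfolding N_def .
qed

section \<open>The sparse regime\<close>

lemma cut_bound_unless_bad_event:
  assumes E: "E \<subseteq> all_edges n" and k: "k \<le> n"
    and not_dense: "\<not> has_dense_set n K E"
    and not_adjacent: "\<not> has_adjacent_low_pair n (j + 24) E"
    and not_common: "\<not> has_low_pair_common_neighbour n (j + 24) E"
    and not_all_out: "\<not> all_many_edges_out n k j E"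
    and not_inside: "\<not> has_many_edges_inside k 20 E"
    and S: "S \<subseteq> {0..<n}" "card S \<le> K"
  shows "min_degree n E * card S \<le> card (cut_edges n E S)"
proof (rule min_degree_mult_le_card_cut_edges[OF E S(1)])
  show "card {e \<in> E. e \<subseteq> H} \<le> 2 * card H" if "H \<subseteq> S" for H
  proof -
    have "card H \<le> card S" using that S finite_subset[of S "{0..<n}"] by (simp add: card_mono)
    then have "H \<subseteq> {0..<n}" "card H \<le> K" using that S by auto
    then have "\<not> 2 * card H < card {e \<in> E. e \<subseteq> H}" using not_dense unfolding has_dense_set_def by blast
    then show ?thesis by simp
  qed
  show False if "u < n" "v < n" "{u, v} \<in> E" "degree E u \<le> j + 24" "degree E v \<le> j + 24" for u v
  proof -
    have "u \<noteq> v" using that(3) E unfolding all_edges_def by (auto simp: doubleton_eq_iff)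
    then show False using not_adjacent that unfolding has_adjacent_low_pair_def by blast
  qed
  show False if "u < n" "v < n" "w < n" "u \<noteq> v" "{u, w} \<in> E" "{v, w} \<in> E"
    "degree E u \<le> j + 24" "degree E v \<le> j + 24" for u v w
    using not_common that unfolding has_low_pair_common_neighbour_def by blast
  obtain a where a: "a < k" "card (E \<inter> star_edges a {k..<n}) \<le> j"
    using not_all_out unfolding all_many_edges_out_def by (auto simp: not_less)
  then have "card (E \<inter> star_edges a ({0..<k} - {a})) < 20"
    using not_inside unfolding has_many_edges_inside_def by (simp add: not_le)
  moreover have "degree E a \<le> card (E \<inter> star_edges a {k..<n}) + card (E \<inter> star_edges a ({0..<k} - {a}))"
    by (rule degree_le_split[OF E a(1) k])
  moreover have "min_degree n E \<le> degree E a" using a(1) k by (intro min_degree_le) simp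
  ultimately show "min_degree n E + 5 \<le> j + 24" using a by linarith
qed

text \<open>Vertices of degree at most \<open>degree_cap n p + 24\<close> are the low-degree vertices of the
  argument; \<open>core_size n\<close> is the number of vertices among which one of degree at most
  \<open>degree_cap n p + 19\<close> is found.\<close>

definition degree_cap :: "nat \<Rightarrow> real \<Rightarrow> nat" where
  "degree_cap n p = nat \<lfloor>real n * p / 10\<rfloor>"

definition core_size :: "nat \<Rightarrow> nat" where
  "core_size n = nat \<lfloor>real n powr (19/20)\<rfloor>"

definition small_set_size :: "nat \<Rightarrow> nat" where
  "small_set_size n = nat \<lfloor>real n / ln (real n) ^ 3\<rfloor>"

text \<open>The five summands bound the probabilities of the five bad events of
  \<open>cut_bound_unless_bad_event\<close>, in that order.\<close>

definition failure_bound :: "nat \<Rightarrow> real" where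
  "failure_bound n = (let L = ln (real n); q = 1.1 * L / n; X = exp (52 - 13/20 * L) in
      exp 3 * (121/100) / (2 * L) + real n ^ 2 * q * X ^ 2 + real n ^ 3 * q ^ 2 * X ^ 2
    + exp (- (real n powr (19/20) - 1) * exp (- (22/25) * L - 3))
    + real n powr (19/20) * (real n powr (19/20) * q) ^ 20)"

context
  fixes n :: nat and p :: real
  assumes lower: "ln n \<le> n * p" and upper: "p \<le> 1.1 * ln n / n"
    and n_ge_4: "4 \<le> n" and ln_ge_17: "17 \<le> ln n"
    and q_le: "1.1 * ln n / n \<le> 1/2"
    and n_q_squared_le: "2 * n * (1.1 * ln n / n) ^ 2 \<le> 1"
    and q_cap_le: "(1.1 * ln n / n) * (11/100 * ln n + 24) \<le> 1"
    and cap_core_le: "11/100 * ln n + 24 + n powr (19/20) \<le> real n - 3"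
    and core_le: "n powr (19/20) \<le> n / 10"
begin

lemma regime_p_bounds: "0 \<le> p" "p \<le> 1/2" "n * p \<le> 1.1 * ln n"
proof -
  have "0 < real n" using n_ge_4 by simp
  moreover have "0 < real n * p" using lower ln_ge_17 by linarith
  ultimately show "0 \<le> p" by (simp add: zero_less_mult_iff)
  show "p \<le> 1/2" using upper q_le by simp
  show "n * p \<le> 1.1 * ln n" using upper \<open>0 < real n\<close> by (simp add: field_simps)
qed

lemma regime_degree_cap:
  "1 \<le> degree_cap n p" "real (degree_cap n p) \<le> n * p / 10" "n * p / 10 - 1 \<le> degree_cap n p"
  "real (degree_cap n p + 24) \<le> 11/100 * ln n + 24" "p * (degree_cap n p + 24) \<le> 1"
  "degree_cap n p + 24 + 3 \<le> n"
proof -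
  show cap1: "real (degree_cap n p) \<le> n * p / 10"
    unfolding degree_cap_def using regime_p_bounds by simp linarith
  show cap2: "n * p / 10 - 1 \<le> degree_cap n p"
    unfolding degree_cap_def by linarith
  note cap = cap1 cap2
  show "1 \<le> degree_cap n p" using cap lower ln_ge_17 by linarith
  show T: "real (degree_cap n p + 24) \<le> 11/100 * ln n + 24" using cap regime_p_bounds by simp
  have "p * (degree_cap n p + 24) \<le> (1.1 * ln n / n) * (11/100 * ln n + 24)"
    using upper T regime_p_bounds by (intro mult_mono) auto
  then show "p * (degree_cap n p + 24) \<le> 1" using q_cap_le by simp
  have "real (degree_cap n p + 24 + 3) = real (degree_cap n p + 24) + 3" by simp
  then have "real (degree_cap n p + 24 + 3) \<le> real n"
    using T cap_core_le powr_ge_zero[of "real n" "19/20"] by linarith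
  then show "degree_cap n p + 24 + 3 \<le> n" by (simp only: of_nat_le_iff)
qed

lemma regime_core_size:
  "real (core_size n) \<le> n powr (19/20)" "n powr (19/20) - 1 \<le> core_size n"
  "real (core_size n) \<le> n / 10" "core_size n < n" "degree_cap n p \<le> n - core_size n"
proof -
  show k: "real (core_size n) \<le> n powr (19/20)" "n powr (19/20) - 1 \<le> core_size n"
    unfolding core_size_def by simp linarith
  then show k10: "real (core_size n) \<le> n / 10" using core_le by simp
  then show "core_size n < n" using n_ge_4 by simp
  have "real (degree_cap n p + core_size n) \<le> real n"
    using regime_degree_cap(2) regime_p_bounds k cap_core_le ln_ge_17 by simp
  then show "degree_cap n p \<le> n - core_size n" by linarith
qed

lemma regime_prob_dense_set:
  "subset_prob p (all_edges n) (has_dense_set n (small_set_size n)) \<le> exp 3 * (121/100) / (2 * ln n)"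
proof -
  let ?L = "ln (real n)" and ?K = "small_set_size n"
  have L: "0 < ?L" using ln_ge_17 by simp
  have n: "0 < real n" using n_ge_4 by simp
  have K: "real ?K \<le> n / ?L ^ 3" unfolding small_set_size_def using L by simp
  have p: "0 \<le> p" "p \<le> 1" using regime_p_bounds by auto
  have "real n * ?K * p ^ 2 \<le> real n * (n / ?L ^ 3) * (1.1 * ?L / n) ^ 2"
    using K upper p L by (intro mult_mono power_mono) auto
  also have "\<dots> = (121/100) / ?L" using n L by (simp add: field_simps power2_eq_square power3_eq_cube)
  finally have nKp: "real n * ?K * p ^ 2 \<le> (121/100) / ?L" .
  then have "exp 3 * (real n * ?K * p ^ 2) / 4 \<le> exp 3 * ((121/100) / ?L) / 4"
    by (intro divide_right_mono mult_left_mono) auto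
  then have \<rho>: "exp 3 * n * ?K * p ^ 2 / 4 \<le> exp 3 * (121/100) / (4 * ?L)"
    by (simp add: mult.assoc)
  have "exp 3 * (121/100) / (4 * ?L) \<le> 27 * (121/100) / (4 * ?L)"
    using exp_3_le L by (intro divide_right_mono mult_right_mono) auto
  also have "\<dots> \<le> 1/2" using ln_ge_17 by (simp add: field_simps)
  finally have \<rho>_le: "exp 3 * n * ?K * p ^ 2 / 4 \<le> 1/2" using \<rho> by linarith
  have "real ?K * p \<le> (n / ?L ^ 3) * (1.1 * ?L / n)" using K upper p by (intro mult_mono) auto
  also have "\<dots> = 1.1 / ?L ^ 2" using n L by (simp add: field_simps power2_eq_square power3_eq_cube)
  also have "\<dots> \<le> 1.1 / 17 ^ 2" using ln_ge_17 by (intro divide_left_mono power_mono) auto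
  finally have "exp 1 * ?K * p \<le> 3 * (1.1 / 17 ^ 2)"
    using exp_le p by (simp only: mult.assoc) (intro mult_mono, auto)
  then have Kp: "exp 1 * ?K * p / 2 \<le> 1" by simp
  have "subset_prob p (all_edges n) (has_dense_set n ?K) \<le> exp 3 * n * ?K * p ^ 2 / 2"
    by (rule prob_dense_set_le_geometric[OF p \<rho>_le Kp])
  also have "\<dots> \<le> exp 3 * (121/100) / (2 * ?L)" using \<rho> by (simp add: field_simps)
  finally show ?thesis .
qed

lemma regime_binom_cdf_small:
  assumes "n \<le> N + 3" "degree_cap n p + 24 \<le> N"
  shows "binom_cdf N p (degree_cap n p + 24) \<le> exp (52 - 13/20 * ln n)"
  using regime_p_bounds regime_degree_cap lower assms
  by (intro binom_cdf_small_le) (auto simp: mult.commute)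

lemma regime_prob_adjacent_low_pair:
  "subset_prob p (all_edges n) (has_adjacent_low_pair n (degree_cap n p + 24))
    \<le> real n ^ 2 * (1.1 * ln n / n) * exp (52 - 13/20 * ln n) ^ 2"
proof -
  let ?T = "degree_cap n p + 24"
  have p: "0 \<le> p" "p \<le> 1" using regime_p_bounds by auto
  have "binom_cdf (n - 2) p ?T ^ 2 \<le> exp (52 - 13/20 * ln n) ^ 2"
    using regime_degree_cap(6) binom_cdf_nonneg[OF p]
    by (intro power_mono regime_binom_cdf_small) auto
  then have "p * binom_cdf (n - 2) p ?T ^ 2 \<le> (1.1 * ln n / n) * exp (52 - 13/20 * ln n) ^ 2"
    using upper p by (intro mult_mono) auto
  then have "real n ^ 2 * (p * binom_cdf (n - 2) p ?T ^ 2)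
      \<le> real n ^ 2 * ((1.1 * ln n / n) * exp (52 - 13/20 * ln n) ^ 2)"
    by (rule mult_left_mono) simp
  with prob_adjacent_low_pair_le[OF p, of n ?T] show ?thesis by (simp only: mult.assoc)
qed

lemma regime_prob_low_pair_common_neighbour:
  "subset_prob p (all_edges n) (has_low_pair_common_neighbour n (degree_cap n p + 24))
    \<le> real n ^ 3 * (1.1 * ln n / n) ^ 2 * exp (52 - 13/20 * ln n) ^ 2"
proof -
  let ?T = "degree_cap n p + 24"
  have p: "0 \<le> p" "p \<le> 1" using regime_p_bounds by auto
  have "binom_cdf (n - 3) p ?T ^ 2 \<le> exp (52 - 13/20 * ln n) ^ 2"
    using regime_degree_cap(6) binom_cdf_nonneg[OF p]
    by (intro power_mono regime_binom_cdf_small) auto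
  moreover have "p ^ 2 \<le> (1.1 * ln n / n) ^ 2" using upper p by (intro power_mono) auto
  ultimately have "p ^ 2 * binom_cdf (n - 3) p ?T ^ 2 \<le> (1.1 * ln n / n) ^ 2 * exp (52 - 13/20 * ln n) ^ 2"
    using p by (intro mult_mono) auto
  then have "real n ^ 3 * (p ^ 2 * binom_cdf (n - 3) p ?T ^ 2)
      \<le> real n ^ 3 * ((1.1 * ln n / n) ^ 2 * exp (52 - 13/20 * ln n) ^ 2)"
    by (rule mult_left_mono) simp
  with prob_low_pair_common_neighbour_le[OF p, of n ?T] show ?thesis by (simp only: mult.assoc)
qed

lemma regime_prob_all_many_edges_out:
  "subset_prob p (all_edges n) (all_many_edges_out n (core_size n) (degree_cap n p))
    \<le> exp (- (real n powr (19/20) - 1) * exp (- (22/25) * ln n - 3))"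
proof -
  let ?k = "core_size n" and ?j = "degree_cap n p"
  define b where "b = binom_cdf (n - ?k) p ?j"
  have p: "0 \<le> p" "p \<le> 1" using regime_p_bounds by auto
  have "- (22/25) * ln n - 3 \<le> - 0.8 * n * p - 3" using regime_p_bounds(3) by linarith
  then have "exp (- (22/25) * ln n - 3) \<le> exp (- 0.8 * n * p - 3)" by simp
  also have "\<dots> \<le> b"
  proof -
    have "2 * n * p ^ 2 \<le> 2 * n * (1.1 * ln n / n) ^ 2"
      using upper p by (intro mult_left_mono power_mono) auto
    then have "2 * n * p ^ 2 \<le> 1" using n_q_squared_le by linarith
    then show ?thesis unfolding b_def
      using regime_p_bounds(1,2) regime_degree_cap(1) regime_core_size(3,5)
      by (intro binom_cdf_at_tenth_ge) (simp_all add: degree_cap_def)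
  qed
  finally have b: "exp (- (22/25) * ln n - 3) \<le> b" .
  have "1 \<le> real n powr (19/20)" using n_ge_4 by (intro ge_one_powr_ge_zero) auto
  then have "(real n powr (19/20) - 1) * exp (- (22/25) * ln n - 3) \<le> real ?k * b"
    using regime_core_size(2) b by (intro mult_mono) auto
  then have "exp (- (real ?k * b)) \<le> exp (- (real n powr (19/20) - 1) * exp (- (22/25) * ln n - 3))"
    by (subst exp_le_cancel_iff) (simp only: mult_minus_left neg_le_iff_le)
  moreover have "(1 - b) ^ ?k \<le> exp (- (real ?k * b))"
  proof -
    have "(1 - b) ^ ?k \<le> exp (- b) ^ ?k"
      using binom_cdf_le_1[OF p] unfolding b_def
      by (intro power_mono) (auto simp: exp_ge_add_one_self[of "-_", simplified])
    then show ?thesis by (simp add: exp_of_nat_mult[symmetric])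
  qed
  moreover have "subset_prob p (all_edges n) (all_many_edges_out n ?k ?j) = (1 - b) ^ ?k"
    unfolding b_def using regime_core_size(4) by (intro prob_all_many_edges_out[OF p]) simp
  ultimately show ?thesis by linarith
qed

lemma regime_prob_many_edges_inside:
  "subset_prob p (all_edges n) (has_many_edges_inside (core_size n) 20)
    \<le> real n powr (19/20) * (real n powr (19/20) * (1.1 * ln n / n)) ^ 20"
proof -
  let ?k = "core_size n"
  have p: "0 \<le> p" "p \<le> 1" using regime_p_bounds by auto
  have "real ((?k - 1) choose 20) \<le> real (?k - 1) ^ 20 / fact 20" by (rule binomial_le_power_div_fact)
  also have "\<dots> \<le> real (?k - 1) ^ 20" by (simp add: divide_le_eq mult_le_cancel_left1)
  also have "\<dots> \<le> real ?k ^ 20" by (intro power_mono) auto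
  finally have "real ?k * (real ((?k - 1) choose 20) * p ^ 20) \<le> real ?k * (real ?k * p) ^ 20"
    using p by (simp add: power_mult_distrib mult_left_mono mult_right_mono)
  also have "\<dots> \<le> real n powr (19/20) * (real n powr (19/20) * (1.1 * ln n / n)) ^ 20"
    using regime_core_size(1) upper p
    by (intro mult_mono power_mono) (auto intro!: divide_nonneg_nonneg mult_nonneg_nonneg)
  finally show ?thesis
    using prob_many_edges_inside_le[OF p, of ?k n 20] regime_core_size(4) by simp
qed

lemma regime_prob_good:
  "1 - failure_bound n \<le> gnp_prob n p (\<lambda>E. \<forall>S \<subseteq> {0..<n}.
      1 \<le> card S \<and> real (card S) \<le> real n / (ln (real n)) ^ 3
        \<longrightarrow> card (cut_edges n E S) \<ge> min_degree n E * card S)"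
    (is "_ \<le> gnp_prob n p ?good")
proof -
  let ?j = "degree_cap n p" and ?k = "core_size n" and ?K = "small_set_size n"
  let ?A = "all_edges n"
  let ?dense = "has_dense_set n ?K" and ?adjacent = "has_adjacent_low_pair n (?j + 24)"
    and ?common = "has_low_pair_common_neighbour n (?j + 24)"
    and ?out = "all_many_edges_out n ?k ?j" and ?inside = "has_many_edges_inside ?k 20"
  have p: "0 \<le> p" "p \<le> 1" using regime_p_bounds by auto
  have "subset_prob p ?A (\<lambda>E. \<not> ?good E)
      \<le> subset_prob p ?A (\<lambda>E. ?dense E \<or> ?adjacent E \<or> ?common E \<or> ?out E \<or> ?inside E)"
  proof (rule subset_prob_mono[OF p])
    fix E assume E: "E \<subseteq> ?A" and not_good: "\<not> ?good E"
    show "?dense E \<or> ?adjacent E \<or> ?common E \<or> ?out E \<or> ?inside E"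
    proof (rule ccontr)
      assume "\<not> (?dense E \<or> ?adjacent E \<or> ?common E \<or> ?out E \<or> ?inside E)"
      then have no_bad: "\<not> ?dense E" "\<not> ?adjacent E" "\<not> ?common E" "\<not> ?out E" "\<not> ?inside E"
        by auto
      have "?good E"
      proof (intro allI impI)
        fix S assume S: "S \<subseteq> {0..<n}" "1 \<le> card S \<and> real (card S) \<le> real n / ln (real n) ^ 3"
        then have "card S \<le> ?K" unfolding small_set_size_def by (simp add: le_nat_floor)
        with S(1) show "min_degree n E * card S \<le> card (cut_edges n E S)"
          using cut_bound_unless_bad_event[OF E _ no_bad] regime_core_size(4) by simp
      qed
      then show False using not_good by contradiction
    qed
  qed
  also have "\<dots> \<le> subset_prob p ?A ?dense + subset_prob p ?A ?adjacent + subset_prob p ?A ?common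
      + subset_prob p ?A ?out + subset_prob p ?A ?inside"
    using subset_prob_disj_le[OF p, of ?A ?dense "\<lambda>E. ?adjacent E \<or> ?common E \<or> ?out E \<or> ?inside E"]
      subset_prob_disj_le[OF p, of ?A ?adjacent "\<lambda>E. ?common E \<or> ?out E \<or> ?inside E"]
      subset_prob_disj_le[OF p, of ?A ?common "\<lambda>E. ?out E \<or> ?inside E"]
      subset_prob_disj_le[OF p, of ?A ?out ?inside]
    by linarith
  also have "\<dots> \<le> failure_bound n"
    using regime_prob_dense_set regime_prob_adjacent_low_pair regime_prob_low_pair_common_neighbour
      regime_prob_all_many_edges_out regime_prob_many_edges_inside
    unfolding failure_bound_def Let_def by linarith
  finally show ?thesis
    unfolding gnp_prob_eq_subset_prob using subset_prob_not[OF finite_all_edges, of p n ?good] by linarith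
qed

end

lemma failure_bound_tendsto_0: "failure_bound \<longlonglongrightarrow> 0"
proof -
  have "(\<lambda>n. failure_bound n) \<longlonglongrightarrow> 0"
    unfolding failure_bound_def Let_def by real_asymp
  then show ?thesis by simp
qed

lemma eventually_regime:
  "eventually (\<lambda>n::nat. 4 \<le> n \<and> 17 \<le> ln n \<and> 1.1 * ln n / n \<le> 1/2
      \<and> 2 * n * (1.1 * ln n / n) ^ 2 \<le> 1 \<and> (1.1 * ln n / n) * (11/100 * ln n + 24) \<le> 1
      \<and> 11/100 * ln n + 24 + n powr (19/20) \<le> real n - 3 \<and> n powr (19/20) \<le> n / 10) sequentially"
  by (intro eventually_conj eventually_ge_at_top) real_asymp+

theorem lemma3p5:
  fixes p :: "nat \<Rightarrow> real"
  assumes lower: "filterlim (\<lambda>n. real n * p n - ln (real n)) at_top sequentially"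
    and upper: "eventually (\<lambda>n. p n \<le> 1.1 * ln (real n) / real n) sequentially"
  shows "(\<lambda>n. gnp_prob n (p n)
            (\<lambda>E. \<forall>S \<subseteq> {0..<n}. 1 \<le> card S \<and> real (card S) \<le> real n / (ln (real n)) ^ 3
                   \<longrightarrow> card (cut_edges n E S) \<ge> min_degree n E * card S))
         \<longlonglongrightarrow> 1"
    (is "(\<lambda>n. gnp_prob n (p n) (?good n)) \<longlonglongrightarrow> 1")
proof (rule tendsto_sandwich)
  have "eventually (\<lambda>n. 0 \<le> real n * p n - ln (real n)) sequentially"
    using lower unfolding filterlim_at_top by blast
  then have "eventually (\<lambda>n. ln (real n) \<le> real n * p n) sequentially"
    by (rule eventually_mono) simp
  from this upper eventually_regime
  have "eventually (\<lambda>n. 0 \<le> p n \<and> p n \<le> 1/2 \<and> 1 - failure_bound n \<le> gnp_prob n (p n) (?good n))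
    sequentially"
  proof eventually_elim
    case (elim n)
    then show ?case
      using regime_p_bounds(1,2)[OF elim(1,2)] regime_prob_good[OF elim(1,2)] by blast
  qed
  then show "eventually (\<lambda>n. 1 - failure_bound n \<le> gnp_prob n (p n) (?good n)) sequentially"
    and "eventually (\<lambda>n. gnp_prob n (p n) (?good n) \<le> 1) sequentially"
    by (auto elim!: eventually_mono simp: gnp_prob_eq_subset_prob intro: subset_prob_le_1 finite_all_edges)
  show "(\<lambda>n. 1 - failure_bound n) \<longlonglongrightarrow> 1"
    using tendsto_diff[OF tendsto_const failure_bound_tendsto_0, of 1] by simp
qed simp

end
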